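(* Let $F$, $H$, $X$, $\Omega$, $Q$ and the sequences generated by the IneIREG method be as described in the context, and suppose $H$ is $\mu$-strongly monotone for some $\mu>0$. Suppose $\eta_k\equiv\eta>0$; $\lambda_k\in[\underline\lambda,\overline\lambda]$ for all $k\ge0$ with $0<\underline\lambda\le\overline\lambda<1/L$, $L:=L_F+\eta L_H$; and $\alpha_0\in[0,1]$ and $\alpha_{k+1}\le(1-\beta_k)\alpha_k$ for all $k\ge0$, where $\beta_k:=\big(\frac{1}{1-\lambda_k^2L^2}+\frac{1}{2\lambda_k\eta\mu}\big)^{-1}$. Define $p_k:=\big(\prod_{i=0}^k(1-\beta_i)\big)^{-1}$ for $k\ge0$, for $k\ge1$ $\Lambda_k:=\sum_{j=0}^{k-1}\lambda_j\eta p_j$ and $\overline y_k:=\Lambda_k^{-1}\sum_{j=0}^{k-1}\lambda_j\eta p_jy_j$, and $\beta:=\big(\frac{1}{1-\overline\lambda^2L^2}+\frac{1}{2\underline\lambda\eta\mu}\big)^{-1}\in(0,1)$. Then for all $k\ge1$, $$-B_H\,\mathrm{dist}(\overline y_k,Q)\le\mathrm{Gap}(\overline y_k,H,Q)\le(k+1)(1-\beta)^k\Big(\frac{D_X^2}{\underline\lambda\eta}\Big).$$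
   Context: Work in $\mathbb{R}^n$ with Euclidean inner product $\langle\cdot,\cdot\rangle$ and norm $\|\cdot\|$. The maps $F\colon \mathrm{Dom}\,F\to\mathbb{R}^n$ and $H\colon\mathrm{Dom}\,H\to\mathbb{R}^n$ are monotone and Lipschitz continuous with constants $L_F>0$ and $L_H>0$; $H$ is $\mu$-strongly monotone means $\langle H(x)-H(y),x-y\rangle\ge\mu\|x-y\|^2$ for all $x,y\in\mathrm{Dom}\,H$. $X$ is a nonempty compact convex set and $\Omega$ a nonempty closed convex set with $X\subset\Omega\subset\mathrm{Dom}\,F\cap\mathrm{Dom}\,H$; $P_X,P_\Omega$ denote orthogonal projections. $Q:=\{x\in X:\langle F(x),y-x\rangle\ge0\ \forall y\in X\}$ is assumed nonempty. $D_X:=\sup_{x,y\in X}\|x-y\|$, $B_H:=\sup_{x\in Q}\|H(x)\|$, $\mathrm{dist}(y,Q)$ is the Euclidean distance to $Q$. $\mathrm{Gap}(z,H,Q):=\sup_{x\in Q}\langle H(x),z-x\rangle$. IneIREG method: start with $x_0=x_{-1}\in X$; for $k=0,1,\dots$, with parameters $\alpha_k\ge0$, $\lambda_k>0$, $\eta_k>0$, set $w_k=x_k+\alpha_k(x_k-x_{k-1})$, $w'_k=P_\Omega(w_k)$, $y_k=P_X\big(w_k-\lambda_k(F(w'_k)+\eta_kH(w'_k))\big)$, $x_{k+1}=P_X\big(w_k-\lambda_k(F(y_k)+\eta_kH(y_k))\big)$. *)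

theory Defs
  imports "HOL-Analysis.Analysis"
begin

definition monotone_map :: "'a::euclidean_space set \<Rightarrow> ('a \<Rightarrow> 'a) \<Rightarrow> bool" where
  "monotone_map D F \<longleftrightarrow> (\<forall>x\<in>D. \<forall>y\<in>D. 0 \<le> inner (F x - F y) (x - y))"

definition strongly_monotone_map :: "real \<Rightarrow> 'a::euclidean_space set \<Rightarrow> ('a \<Rightarrow> 'a) \<Rightarrow> bool" where
  "strongly_monotone_map \<mu> D H \<longleftrightarrow> (\<forall>x\<in>D. \<forall>y\<in>D. \<mu> * (norm (x - y))\<^sup>2 \<le> inner (H x - H y) (x - y))"

definition VI_sol :: "('a::euclidean_space \<Rightarrow> 'a) \<Rightarrow> 'a set \<Rightarrow> 'a set" where
  "VI_sol F X = {x \<in> X. \<forall>y\<in>X. 0 \<le> inner (F x) (y - x)}"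

definition Gap :: "'a::euclidean_space \<Rightarrow> ('a \<Rightarrow> 'a) \<Rightarrow> 'a set \<Rightarrow> real" where
  "Gap z H Q = (SUP x\<in>Q. inner (H x) (z - x))"

definition ireg_beta :: "real \<Rightarrow> real \<Rightarrow> real \<Rightarrow> real \<Rightarrow> real" where
  "ireg_beta L \<eta> \<mu> lam = inverse (1 / (1 - lam\<^sup>2 * L\<^sup>2) + 1 / (2 * lam * \<eta> * \<mu>))"

end

theory Submission
  imports Defs
begin

text \<open>Fix a solution \<open>u\<close> of VI(F, X). One step of the method satisfies
  \<open>\<parallel>x (k+1) - u\<parallel>\<^sup>2 \<le> (1 - \<beta>\<^sub>k) \<parallel>w k - u\<parallel>\<^sup>2 - 2 \<lambda>\<^sub>k \<eta> \<langle>H u, y k - u\<rangle>\<close>: the Lipschitz error of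
  the extrapolation is paid for by the two projection inequalities, monotonicity of \<open>F\<close> and the
  variational inequality at \<open>u\<close> eliminate \<open>F\<close>, and strong monotonicity of \<open>H\<close> yields the
  contraction \<open>\<beta>\<^sub>k\<close>. The inertial extrapolation costs at most
  \<open>\<alpha>\<^sub>k (\<parallel>x k - u\<parallel>\<^sup>2 - \<parallel>x (k-1) - u\<parallel>\<^sup>2) + 2 \<alpha>\<^sub>k D\<^sub>X\<^sup>2\<close>. Weighting step \<open>k\<close> by
  \<open>p\<^sub>k = (\<Prod>i\<le>k. 1 - \<beta>\<^sub>i)\<^sup>-\<^sup>1\<close> cancels the contraction factors, and because \<open>\<alpha>\<^sub>k\<close> decays at least
  as fast as the weights grow, the inertial terms nearly telescope; summation gives
  \<open>\<Sum>j<k. 2 \<lambda>\<^sub>j \<eta> p\<^sub>j \<langle>H u, y j - u\<rangle> \<le> (2k + 1) D\<^sub>X\<^sup>2\<close>. Dividing by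
  \<open>\<Lambda>\<^sub>k \<ge> \<lambda>\<^sub>l\<^sub>o \<eta> (1 - \<beta>)\<^sup>-\<^sup>k\<close> and taking the supremum over \<open>u\<close> bounds the gap from above;
  the lower bound is Cauchy-Schwarz, \<open>\<langle>H u, ybar - u\<rangle> \<ge> -B\<^sub>H \<parallel>ybar - u\<parallel>\<close>.\<close>

lemma inverse_sum_inverse_mult_square_le:
  fixes c1 c2 s t :: real
  assumes "0 < c1" "0 < c2"
  shows "inverse (1 / c1 + 1 / c2) * (s + t)\<^sup>2 \<le> c1 * s\<^sup>2 + c2 * t\<^sup>2"
proof -
  have "c1 * c2 * (s + t)\<^sup>2 \<le> (c1 + c2) * (c1 * s\<^sup>2 + c2 * t\<^sup>2)"
    using zero_le_power2[of "c1 * s - c2 * t"] by (simp add: power2_eq_square algebra_simps)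
  moreover have "inverse (1 / c1 + 1 / c2) = c1 * c2 / (c1 + c2)"
    using assms by (simp add: field_simps)
  ultimately show ?thesis
    using assms by (simp add: field_simps)
qed

lemma ireg_beta_bounds:
  assumes "0 < lam" "0 \<le> L" "lam * L < 1" "0 < \<eta>" "0 < \<mu>"
  shows "0 < ireg_beta L \<eta> \<mu> lam" "ireg_beta L \<eta> \<mu> lam < 1"
proof -
  have "(lam * L)\<^sup>2 < 1"
    using assms by (simp add: power_less_one_iff abs_if)
  then have "0 < 1 - lam\<^sup>2 * L\<^sup>2" "1 - lam\<^sup>2 * L\<^sup>2 \<le> 1"
    by (simp_all add: power_mult_distrib)
  moreover have "0 < 2 * lam * \<eta> * \<mu>"
    using assms by simp
  ultimately have "1 < 1 / (1 - lam\<^sup>2 * L\<^sup>2) + 1 / (2 * lam * \<eta> * \<mu>)"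
    by (smt (verit) le_divide_eq_1_pos divide_pos_pos)
  then show "0 < ireg_beta L \<eta> \<mu> lam" "ireg_beta L \<eta> \<mu> lam < 1"
    unfolding ireg_beta_def by (simp_all add: inverse_less_1_iff)
qed

lemma ireg_beta_ge:
  assumes "0 < lam_lo" "lam_lo \<le> lam" "lam \<le> lam_hi" "0 \<le> L" "lam_hi * L < 1" "0 < \<eta>" "0 < \<mu>"
  shows "inverse (1 / (1 - lam_hi\<^sup>2 * L\<^sup>2) + 1 / (2 * lam_lo * \<eta> * \<mu>)) \<le> ireg_beta L \<eta> \<mu> lam"
proof -
  have "(lam_hi * L)\<^sup>2 < 1"
    using assms by (simp add: power_less_one_iff abs_if)
  moreover have "(lam * L)\<^sup>2 \<le> (lam_hi * L)\<^sup>2"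
    using assms by (intro power_mono mult_right_mono) auto
  ultimately have hi: "0 < 1 - lam_hi\<^sup>2 * L\<^sup>2" and le: "1 - lam_hi\<^sup>2 * L\<^sup>2 \<le> 1 - lam\<^sup>2 * L\<^sup>2"
    by (simp_all add: power_mult_distrib)
  have "1 / (1 - lam\<^sup>2 * L\<^sup>2) \<le> 1 / (1 - lam_hi\<^sup>2 * L\<^sup>2)"
    using hi le by (intro divide_left_mono) auto
  moreover have "1 / (2 * lam * \<eta> * \<mu>) \<le> 1 / (2 * lam_lo * \<eta> * \<mu>)"
    using assms by (intro divide_left_mono mult_right_mono) auto
  moreover have "0 < 1 / (1 - lam\<^sup>2 * L\<^sup>2) + 1 / (2 * lam * \<eta> * \<mu>)"
    using hi le assms by (intro add_pos_pos) auto
  ultimately show ?thesis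
    unfolding ireg_beta_def by (intro le_imp_inverse_le) auto
qed

lemma projected_extragradient_step:
  fixes G :: "'a::euclidean_space \<Rightarrow> 'a"
  assumes G_lip: "L-lipschitz_on \<Omega> G"
    and X: "closed X" "convex X" and \<Omega>: "closed \<Omega>" "convex \<Omega>" and X_sub: "X \<subseteq> \<Omega>"
    and u: "u \<in> X" and lam: "0 \<le> lam"
    and y: "y = closest_point X (z - lam *\<^sub>R G (closest_point \<Omega> z))"
    and x': "x' = closest_point X (z - lam *\<^sub>R G y)"
  shows "(norm (x' - u))\<^sup>2
    \<le> (norm (z - u))\<^sup>2 - (1 - lam\<^sup>2 * L\<^sup>2) * (norm (z - y))\<^sup>2 + 2 * lam * inner (G y) (u - y)"
proof -
  define z' where "z' = closest_point \<Omega> z"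
  have "X \<noteq> {}" "\<Omega> \<noteq> {}"
    using u X_sub by auto
  then have yX: "y \<in> X" and x'X: "x' \<in> X" and z'\<Omega>: "z' \<in> \<Omega>"
    unfolding y x' z'_def using X \<Omega> closest_point_in_set by blast+
  have proj_x': "inner ((z - lam *\<^sub>R G y) - x') (u - x') \<le> 0"
    unfolding x' using closest_point_dot[OF X(2,1) u] .
  have proj_y: "inner ((z - lam *\<^sub>R G z') - y) (x' - y) \<le> 0"
    unfolding y z'_def using closest_point_dot[OF X(2,1) x'X] .
  have z'_y: "norm (z' - y) \<le> norm (z - y)"
    using closest_point_lipschitz[OF \<Omega>(2,1) \<open>\<Omega> \<noteq> {}\<close>, of z y] closest_point_self[of y \<Omega>]
      yX X_sub unfolding z'_def dist_norm by auto
  have "inner (G z' - G y) (x' - y) \<le> norm (G z' - G y) * norm (x' - y)"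
    by (rule norm_cauchy_schwarz)
  also have "\<dots> \<le> L * norm (z' - y) * norm (x' - y)"
    using lipschitz_on_normD[OF G_lip z'\<Omega>, of y] yX X_sub by (simp add: mult_right_mono subset_eq)
  also have "\<dots> \<le> L * norm (z - y) * norm (x' - y)"
    using z'_y lipschitz_on_nonneg[OF G_lip] by (intro mult_right_mono mult_left_mono) auto
  finally have "2 * lam * inner (G z' - G y) (x' - y) \<le> 2 * lam * (L * norm (z - y) * norm (x' - y))"
    using lam by (intro mult_left_mono) auto
  also have "\<dots> \<le> lam\<^sup>2 * L\<^sup>2 * (norm (z - y))\<^sup>2 + (norm (x' - y))\<^sup>2"
    using zero_le_power2[of "lam * L * norm (z - y) - norm (x' - y)"]
    by (simp add: power2_eq_square algebra_simps)
  finally have extrapolation_error: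
    "2 * lam * inner (G z' - G y) (x' - y) \<le> lam\<^sup>2 * L\<^sup>2 * (norm (z - y))\<^sup>2 + (norm (x' - y))\<^sup>2" .
  have "(norm (x' - u))\<^sup>2 = (norm (z - u))\<^sup>2 - (norm (z - y))\<^sup>2 - (norm (x' - y))\<^sup>2
      + 2 * inner ((z - lam *\<^sub>R G y) - x') (u - x') + 2 * inner ((z - lam *\<^sub>R G z') - y) (x' - y)
      + 2 * lam * inner (G z' - G y) (x' - y) + 2 * lam * inner (G y) (u - y)"
    by (simp add: power2_norm_eq_inner inner_diff inner_add inner_commute algebra_simps)
  then show ?thesis
    using proj_x' proj_y extrapolation_error by (simp add: left_diff_distrib)
qed

lemma ireg_step_contraction:
  fixes F H :: "'a::euclidean_space \<Rightarrow> 'a"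
  assumes F_mono: "monotone_map DF F" and F_lip: "LF-lipschitz_on DF F"
    and H_strong: "strongly_monotone_map \<mu> DH H" and H_lip: "LH-lipschitz_on DH H"
    and \<mu>: "0 < \<mu>" and \<eta>: "0 < \<eta>" and lam: "0 < lam" "lam * (LF + \<eta> * LH) < 1"
    and X: "closed X" "convex X" and \<Omega>: "closed \<Omega>" "convex \<Omega>"
    and X_sub: "X \<subseteq> \<Omega>" and \<Omega>_sub: "\<Omega> \<subseteq> DF \<inter> DH"
    and u: "u \<in> VI_sol F X"
    and y: "y = closest_point X (z - lam *\<^sub>R (F (closest_point \<Omega> z) + \<eta> *\<^sub>R H (closest_point \<Omega> z)))"
    and x': "x' = closest_point X (z - lam *\<^sub>R (F y + \<eta> *\<^sub>R H y))"
  shows "(norm (x' - u))\<^sup>2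
    \<le> (1 - ireg_beta (LF + \<eta> * LH) \<eta> \<mu> lam) * (norm (z - u))\<^sup>2 - 2 * lam * \<eta> * inner (H u) (y - u)"
proof -
  define L where "L = LF + \<eta> * LH"
  define \<beta> where "\<beta> = ireg_beta L \<eta> \<mu> lam"
  have uX: "u \<in> X" and u_sol: "\<And>t. t \<in> X \<Longrightarrow> 0 \<le> inner (F u) (t - u)"
    using u unfolding VI_sol_def by auto
  have yX: "y \<in> X"
    unfolding y using X uX closest_point_in_set by blast
  have "L-lipschitz_on \<Omega> (\<lambda>v. F v + \<eta> *\<^sub>R H v)"
    unfolding L_def using \<eta> \<Omega>_sub
    by (intro lipschitz_on_add lipschitz_on_cmult_nonneg lipschitz_on_subset[OF F_lip]
        lipschitz_on_subset[OF H_lip]) auto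
  from projected_extragradient_step[OF this X \<Omega> X_sub uX less_imp_le[OF lam(1)] y x']
  have extragradient: "(norm (x' - u))\<^sup>2 \<le> (norm (z - u))\<^sup>2 - (1 - lam\<^sup>2 * L\<^sup>2) * (norm (z - y))\<^sup>2
      + 2 * lam * inner (F y + \<eta> *\<^sub>R H y) (u - y)" .
  have F_part: "0 \<le> inner (F y - F u) (y - u)" "0 \<le> inner (F u) (y - u)"
    using F_mono u_sol yX uX X_sub \<Omega>_sub unfolding monotone_map_def by blast+
  have "\<mu> * (norm (y - u))\<^sup>2 \<le> inner (H y - H u) (y - u)"
    using H_strong yX uX X_sub \<Omega>_sub unfolding strongly_monotone_map_def by blast
  then have H_part: "\<eta> * (\<mu> * (norm (y - u))\<^sup>2) \<le> \<eta> * inner (H y - H u) (y - u)"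
    using \<eta> by (intro mult_left_mono) auto
  have "inner (F y + \<eta> *\<^sub>R H y) (u - y) = - inner (F y - F u) (y - u) - inner (F u) (y - u)
      - \<eta> * inner (H y - H u) (y - u) - \<eta> * inner (H u) (y - u)"
    by (simp add: inner_diff inner_add_left algebra_simps)
  with F_part H_part have "inner (F y + \<eta> *\<^sub>R H y) (u - y)
      \<le> - \<eta> * \<mu> * (norm (y - u))\<^sup>2 - \<eta> * inner (H u) (y - u)"
    by linarith
  then have "2 * lam * inner (F y + \<eta> *\<^sub>R H y) (u - y)
      \<le> 2 * lam * (- \<eta> * \<mu> * (norm (y - u))\<^sup>2 - \<eta> * inner (H u) (y - u))"
    using lam by (intro mult_left_mono) auto
  with extragradient have descent: "(norm (x' - u))\<^sup>2 \<le> (norm (z - u))\<^sup>2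
      - ((1 - lam\<^sup>2 * L\<^sup>2) * (norm (z - y))\<^sup>2 + 2 * lam * \<eta> * \<mu> * (norm (y - u))\<^sup>2)
      - 2 * lam * \<eta> * inner (H u) (y - u)"
    by (simp add: algebra_simps)
  have "0 \<le> L"
    unfolding L_def using lipschitz_on_nonneg[OF F_lip] lipschitz_on_nonneg[OF H_lip] \<eta> by simp
  then have "(lam * L)\<^sup>2 < 1"
    using lam unfolding L_def[symmetric] by (simp add: power_less_one_iff abs_if)
  then have c1: "0 < 1 - lam\<^sup>2 * L\<^sup>2"
    by (simp add: power_mult_distrib)
  have c2: "0 < 2 * lam * \<eta> * \<mu>"
    using lam \<eta> \<mu> by simp
  have "(norm (z - u))\<^sup>2 \<le> (norm (z - y) + norm (y - u))\<^sup>2"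
    using norm_triangle_ineq[of "z - y" "y - u"] by (simp add: power_mono)
  moreover have "0 \<le> \<beta>"
    using c1 c2 unfolding \<beta>_def ireg_beta_def by simp
  ultimately have "\<beta> * (norm (z - u))\<^sup>2 \<le> \<beta> * (norm (z - y) + norm (y - u))\<^sup>2"
    by (rule mult_left_mono)
  also have "\<dots> \<le> (1 - lam\<^sup>2 * L\<^sup>2) * (norm (z - y))\<^sup>2 + 2 * lam * \<eta> * \<mu> * (norm (y - u))\<^sup>2"
    unfolding \<beta>_def ireg_beta_def using c1 c2 by (rule inverse_sum_inverse_mult_square_le)
  finally have "\<beta> * (norm (z - u))\<^sup>2
      \<le> (1 - lam\<^sup>2 * L\<^sup>2) * (norm (z - y))\<^sup>2 + 2 * lam * \<eta> * \<mu> * (norm (y - u))\<^sup>2" .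
  with descent have "(norm (x' - u))\<^sup>2 \<le> (1 - \<beta>) * (norm (z - u))\<^sup>2 - 2 * lam * \<eta> * inner (H u) (y - u)"
    by (simp add: left_diff_distrib)
  then show ?thesis
    unfolding \<beta>_def L_def .
qed

lemma norm_inertial_point_le:
  fixes x x' u :: "'a::real_inner"
  assumes "0 \<le> \<alpha>" "\<alpha> \<le> 1" "norm (x - x') \<le> D"
  shows "(norm (x + \<alpha> *\<^sub>R (x - x') - u))\<^sup>2
    \<le> (norm (x - u))\<^sup>2 + \<alpha> * ((norm (x - u))\<^sup>2 - (norm (x' - u))\<^sup>2) + 2 * \<alpha> * D\<^sup>2"
proof -
  have "(norm (x + \<alpha> *\<^sub>R (x - x') - u))\<^sup>2 = (norm (x - u))\<^sup>2
      + \<alpha> * ((norm (x - u))\<^sup>2 - (norm (x' - u))\<^sup>2) + \<alpha> * (1 + \<alpha>) * (norm (x - x'))\<^sup>2"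
    by (simp add: power2_norm_eq_inner inner_diff inner_add inner_commute algebra_simps)
  moreover have "\<alpha> * (1 + \<alpha>) * (norm (x - x'))\<^sup>2 \<le> \<alpha> * 2 * D\<^sup>2"
    using assms by (intro mult_mono power_mono) auto
  ultimately show ?thesis
    by simp
qed

text \<open>The inertial terms \<open>c j (a j - a (j - 1))\<close> do not telescope; the defect is absorbed because
  \<open>c\<close> is nonincreasing with \<open>c 0 \<le> 1\<close> and \<open>a\<close> takes values in \<open>[0, D]\<close>. Note \<open>a (0 - 1) = a 0\<close>.\<close>
lemma inertial_weighted_sum_le:
  fixes a q c r :: "nat \<Rightarrow> real"
  assumes a: "\<And>j. 0 \<le> a j" "\<And>j. a j \<le> D"
    and q: "q 0 = 1" "\<And>j. 0 \<le> q j"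
    and c: "\<And>j. 0 \<le> c j" "c 0 \<le> 1" "\<And>j. c (Suc j) \<le> c j"
    and step: "\<And>j. q (Suc j) * a (Suc j) + r j \<le> q j * a j + c j * (a j - a (j - 1)) + 2 * c j * D"
  shows "(\<Sum>j<k. r j) \<le> (2 * real k + 1) * D"
proof -
  have c_le_1: "c j \<le> 1" for j
  proof (induction j)
    case (Suc j)
    then show ?case using c(3)[of j] by linarith
  qed (use c in simp)
  have invariant: "q k * a k - c k * a (k - 1) + (\<Sum>j<k. r j) \<le> (2 * real k + 1) * D - c k * D" for k
  proof (induction k)
    case 0
    have "(1 - c 0) * a 0 \<le> (1 - c 0) * D"
      using a c by (intro mult_left_mono) auto
    then show ?case
      using q(1) by (simp add: algebra_simps)
  next
    case (Suc k)
    have "(c k - c (Suc k)) * a k \<le> (c k - c (Suc k)) * D"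
      using a c by (intro mult_left_mono) auto
    moreover have "c k * D \<le> 1 * D"
      using c_le_1[of k] a(1)[of 0] a(2)[of 0] by (intro mult_right_mono) auto
    moreover have "(\<Sum>j<Suc k. r j) = (\<Sum>j<k. r j) + r k"
      by simp
    ultimately show ?case
      using Suc.IH step[of k] by (simp add: algebra_simps)
  qed
  have "c k * a (k - 1) \<le> c k * D"
    using a c by (intro mult_left_mono) auto
  moreover have "0 \<le> q k * a k"
    using a q by simp
  ultimately show ?thesis
    using invariant[of k] c(1)[of k] by linarith
qed

lemma neg_mult_infdist_le:
  assumes "A \<noteq> {}" "0 \<le> B" "\<And>a. a \<in> A \<Longrightarrow> - B * dist z a \<le> g"
  shows "- B * infdist z A \<le> g"
proof (cases "B = 0")
  case True
  then show ?thesis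
    using assms by fastforce
next
  case False
  then have B: "0 < B"
    using assms(2) by simp
  have "- g / B \<le> infdist z A"
    unfolding infdist_notempty[OF assms(1)]
  proof (rule cINF_greatest[OF assms(1)])
    fix a assume "a \<in> A"
    then show "- g / B \<le> dist z a"
      using assms(3)[of a] B by (simp add: field_simps)
  qed
  then show ?thesis
    using B by (simp add: field_simps)
qed

lemma Gap_le:
  assumes "Q \<noteq> {}" "\<And>u. u \<in> Q \<Longrightarrow> inner (H u) (z - u) \<le> M"
  shows "Gap z H Q \<le> M"
  unfolding Gap_def using assms by (intro cSUP_least)

lemma Gap_ge_neg_mult_infdist:
  fixes H :: "'a::euclidean_space \<Rightarrow> 'a"
  assumes Q: "Q \<noteq> {}" "bounded Q" and H: "bounded (H ` Q)"
  shows "- (SUP u\<in>Q. norm (H u)) * infdist z Q \<le> Gap z H Q"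
proof -
  define B where "B = (SUP u\<in>Q. norm (H u))"
  have bdd_norm: "bdd_above ((\<lambda>u. norm (H u)) ` Q)"
    using H bdd_above_norm[of "H ` Q"] by (simp add: image_comp o_def)
  have H_le: "norm (H u) \<le> B" if "u \<in> Q" for u
    unfolding B_def using that bdd_norm by (rule cSUP_upper)
  obtain R where R: "\<And>u. u \<in> Q \<Longrightarrow> norm u \<le> R"
    using Q(2) bounded_iff by blast
  have "inner (H u) (z - u) \<le> B * (norm z + R)" if "u \<in> Q" for u
  proof -
    have "inner (H u) (z - u) \<le> norm (H u) * norm (z - u)"
      by (rule norm_cauchy_schwarz)
    also have "\<dots> \<le> B * (norm z + R)"
      using H_le[OF that] R[OF that] norm_triangle_ineq4[of z u]
      by (intro mult_mono) (auto intro: order_trans[OF norm_ge_zero])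
    finally show ?thesis .
  qed
  then have bdd: "bdd_above ((\<lambda>u. inner (H u) (z - u)) ` Q)"
    by (intro bdd_aboveI2)
  have "- B * dist z u \<le> Gap z H Q" if "u \<in> Q" for u
  proof -
    have "- B * dist z u \<le> - norm (H u) * norm (z - u)"
      using H_le[OF that] by (simp add: dist_norm mult_right_mono)
    also have "\<dots> \<le> inner (H u) (z - u)"
      using Cauchy_Schwarz_ineq2[of "H u" "z - u"] by linarith
    also have "\<dots> \<le> Gap z H Q"
      unfolding Gap_def using that bdd by (rule cSUP_upper)
    finally show ?thesis .
  qed
  moreover have "0 \<le> B"
    using Q(1) H_le norm_ge_zero order_trans by blast
  ultimately show ?thesis
    unfolding B_def[symmetric] using neg_mult_infdist_le[OF Q(1)] by blast
qed

locale ineireg =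
  fixes F H :: "'a::euclidean_space \<Rightarrow> 'a"
    and DF DH X \<Omega> :: "'a set"
    and LF LH L \<mu> \<eta> lam_lo lam_hi :: real
    and \<alpha> lam :: "nat \<Rightarrow> real"
    and x w y :: "nat \<Rightarrow> 'a"
  assumes F_mono: "monotone_map DF F" and F_lip: "LF-lipschitz_on DF F"
    and H_lip: "LH-lipschitz_on DH H" and H_strong: "strongly_monotone_map \<mu> DH H"
    and \<mu>_pos: "0 < \<mu>" and \<eta>_pos: "0 < \<eta>" and L_eq: "L = LF + \<eta> * LH"
    and X_ne: "X \<noteq> {}" and X_compact: "compact X" and X_convex: "convex X"
    and \<Omega>_closed: "closed \<Omega>" and \<Omega>_convex: "convex \<Omega>"
    and X_sub: "X \<subseteq> \<Omega>" and \<Omega>_sub: "\<Omega> \<subseteq> DF \<inter> DH"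
    and lam_lo_pos: "0 < lam_lo" and lam_hi_L: "lam_hi * L < 1"
    and lam_range: "\<And>k. lam_lo \<le> lam k \<and> lam k \<le> lam_hi"
    and \<alpha>_nonneg: "\<And>k. 0 \<le> \<alpha> k" and \<alpha>_0: "\<alpha> 0 \<le> 1"
    and \<alpha>_Suc: "\<And>k. \<alpha> (Suc k) \<le> (1 - ireg_beta L \<eta> \<mu> (lam k)) * \<alpha> k"
    and x_0: "x 0 \<in> X"
    and w_eq: "\<And>k. w k = x k + \<alpha> k *\<^sub>R (x k - x (k - 1))"
      \<comment> \<open>truncated subtraction \<open>x (0 - 1) = x 0\<close> encodes \<open>x\<^sub>-\<^sub>1 = x\<^sub>0\<close>\<close>
    and y_eq: "\<And>k. y k = closest_point X (w k - lam k *\<^sub>R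
                  (F (closest_point \<Omega> (w k)) + \<eta> *\<^sub>R H (closest_point \<Omega> (w k))))"
    and x_Suc: "\<And>k. x (Suc k) = closest_point X (w k - lam k *\<^sub>R (F (y k) + \<eta> *\<^sub>R H (y k)))"
begin

abbreviation \<beta>_step :: "nat \<Rightarrow> real" where
  "\<beta>_step k \<equiv> ireg_beta L \<eta> \<mu> (lam k)"

abbreviation \<beta> :: real where
  "\<beta> \<equiv> inverse (1 / (1 - lam_hi\<^sup>2 * L\<^sup>2) + 1 / (2 * lam_lo * \<eta> * \<mu>))"

definition p :: "nat \<Rightarrow> real" where
  "p k = inverse (\<Prod>i\<in>{0..k}. 1 - \<beta>_step i)"

text \<open>The paper's \<open>p\<close> shifted by one index, extended by \<open>q 0 = 1\<close>.\<close>
definition q :: "nat \<Rightarrow> real" where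
  "q k = inverse (\<Prod>i<k. 1 - \<beta>_step i)"

definition \<Lambda> :: "nat \<Rightarrow> real" where
  "\<Lambda> k = (\<Sum>j<k. lam j * \<eta> * p j)"

definition ybar :: "nat \<Rightarrow> 'a" where
  "ybar k = inverse (\<Lambda> k) *\<^sub>R (\<Sum>j<k. (lam j * \<eta> * p j) *\<^sub>R y j)"

lemma X_closed: "closed X"
  using X_compact by (rule compact_imp_closed)

lemma x_in_X: "x k \<in> X"
  using x_0 x_Suc closest_point_in_set[OF X_closed X_ne] by (cases k) auto

lemma y_in_X: "y k \<in> X"
  using y_eq closest_point_in_set[OF X_closed X_ne] by simp

lemma norm_diff_le_diameter: "a \<in> X \<Longrightarrow> b \<in> X \<Longrightarrow> norm (a - b) \<le> diameter X"
  using diameter_bounded_bound[OF compact_imp_bounded[OF X_compact]] by (simp add: dist_norm)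

lemma L_nonneg: "0 \<le> L"
  unfolding L_eq using lipschitz_on_nonneg[OF F_lip] lipschitz_on_nonneg[OF H_lip] \<eta>_pos by simp

lemma lam_pos: "0 < lam k"
  using lam_lo_pos lam_range[of k] by linarith

lemma lam_L_lt_1: "lam k * L < 1"
proof -
  have "lam k * L \<le> lam_hi * L"
    using lam_range[of k] L_nonneg by (intro mult_right_mono) auto
  then show ?thesis
    using lam_hi_L by linarith
qed

lemma \<beta>_step_bounds: "\<beta> \<le> \<beta>_step k" "0 < \<beta>_step k" "\<beta>_step k < 1"
  using ireg_beta_ge[OF lam_lo_pos _ _ L_nonneg lam_hi_L \<eta>_pos \<mu>_pos] lam_range[of k]
    ireg_beta_bounds[OF lam_pos L_nonneg lam_L_lt_1 \<eta>_pos \<mu>_pos] by auto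

lemma prod_one_minus_\<beta>_step_pos: "0 < (\<Prod>i<k. 1 - \<beta>_step i)"
  using \<beta>_step_bounds by (intro prod_pos) (simp add: algebra_simps)

lemma q_0: "q 0 = 1"
  unfolding q_def by simp

lemma q_pos: "0 < q k"
  unfolding q_def using prod_one_minus_\<beta>_step_pos by simp

lemma q_Suc: "q (Suc k) * (1 - \<beta>_step k) = q k"
  unfolding q_def prod.lessThan_Suc using \<beta>_step_bounds(3)[of k] prod_one_minus_\<beta>_step_pos[of k]
  by (simp add: inverse_mult_distrib)

lemma p_eq_q: "p k = q (Suc k)"
  unfolding p_def q_def by (simp add: atLeast0AtMost lessThan_Suc_atMost)

lemma inverse_q_le: "inverse (q k) \<le> (1 - \<beta>) ^ k"
proof -
  have "(\<Prod>i<k. 1 - \<beta>_step i) \<le> (\<Prod>i<k. 1 - \<beta>)"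
    using \<beta>_step_bounds by (intro prod_mono) (auto simp: less_imp_le)
  then show ?thesis
    unfolding q_def by simp
qed

lemma \<alpha>_le_1: "\<alpha> k \<le> 1"
proof (induction k)
  case (Suc k)
  have "(1 - \<beta>_step k) * \<alpha> k \<le> \<alpha> k"
    using \<beta>_step_bounds(2)[of k] \<alpha>_nonneg[of k] by (simp add: left_diff_distrib)
  then show ?case
    using \<alpha>_Suc[of k] Suc.IH by linarith
qed (rule \<alpha>_0)

lemma \<alpha>_q_Suc_le: "\<alpha> (Suc k) * q (Suc k) \<le> \<alpha> k * q k"
proof -
  have "\<alpha> (Suc k) * q (Suc k) \<le> ((1 - \<beta>_step k) * \<alpha> k) * q (Suc k)"
    using \<alpha>_Suc[of k] q_pos[of "Suc k"] by (intro mult_right_mono) auto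
  also have "\<dots> = \<alpha> k * (q (Suc k) * (1 - \<beta>_step k))"
    by (simp add: algebra_simps)
  also have "\<dots> = \<alpha> k * q k"
    by (simp add: q_Suc)
  finally show ?thesis .
qed

lemma step_contraction:
  assumes "u \<in> VI_sol F X"
  shows "(norm (x (Suc k) - u))\<^sup>2
    \<le> (1 - \<beta>_step k) * (norm (w k - u))\<^sup>2 - 2 * lam k * \<eta> * inner (H u) (y k - u)"
  using ireg_step_contraction[OF F_mono F_lip H_strong H_lip \<mu>_pos \<eta>_pos lam_pos
      lam_L_lt_1[unfolded L_eq] X_closed X_convex \<Omega>_closed \<Omega>_convex X_sub \<Omega>_sub assms y_eq x_Suc]
  unfolding L_eq .

lemma weighted_gap_sum_le:
  assumes u: "u \<in> VI_sol F X"
  shows "(\<Sum>j<k. 2 * (lam j * \<eta> * p j) * inner (H u) (y j - u)) \<le> (2 * real k + 1) * (diameter X)\<^sup>2"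
proof (rule inertial_weighted_sum_le)
  define a where "a j = (norm (x j - u))\<^sup>2" for j
  have uX: "u \<in> X"
    using u unfolding VI_sol_def by simp
  show "0 \<le> a j" "a j \<le> (diameter X)\<^sup>2" for j
    unfolding a_def using norm_diff_le_diameter[OF x_in_X uX] by (auto intro: power_mono)
  show "q 0 = 1" "0 \<le> q j" for j
    using q_0 q_pos less_imp_le by auto
  show "0 \<le> \<alpha> j * q j" "\<alpha> 0 * q 0 \<le> 1" "\<alpha> (Suc j) * q (Suc j) \<le> \<alpha> j * q j" for j
    using \<alpha>_nonneg q_pos \<alpha>_0 q_0 \<alpha>_q_Suc_le by (auto simp: less_imp_le)
  show "q (Suc j) * a (Suc j) + 2 * (lam j * \<eta> * p j) * inner (H u) (y j - u)
      \<le> q j * a j + \<alpha> j * q j * (a j - a (j - 1)) + 2 * (\<alpha> j * q j) * (diameter X)\<^sup>2" for j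
  proof -
    have "q (Suc j) * a (Suc j)
        \<le> q (Suc j) * ((1 - \<beta>_step j) * (norm (w j - u))\<^sup>2 - 2 * lam j * \<eta> * inner (H u) (y j - u))"
      unfolding a_def using step_contraction[OF u] q_pos[of "Suc j"] by (intro mult_left_mono) auto
    also have "\<dots> = q (Suc j) * (1 - \<beta>_step j) * (norm (w j - u))\<^sup>2
        - 2 * (lam j * \<eta> * p j) * inner (H u) (y j - u)"
      by (simp add: p_eq_q algebra_simps)
    also have "\<dots> = q j * (norm (w j - u))\<^sup>2 - 2 * (lam j * \<eta> * p j) * inner (H u) (y j - u)"
      by (simp add: q_Suc)
    also have "q j * (norm (w j - u))\<^sup>2
        \<le> q j * (a j + \<alpha> j * (a j - a (j - 1)) + 2 * \<alpha> j * (diameter X)\<^sup>2)"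
      unfolding w_eq a_def using q_pos[of j]
      by (intro mult_left_mono norm_inertial_point_le \<alpha>_nonneg \<alpha>_le_1
          norm_diff_le_diameter x_in_X) auto
    finally show ?thesis
      by (simp add: algebra_simps)
  qed
qed

lemma \<Lambda>_ge:
  assumes "1 \<le> k"
  shows "lam_lo * \<eta> * q k \<le> \<Lambda> k"
proof -
  obtain k' where k: "k = Suc k'"
    using assms by (cases k) auto
  have "lam_lo * \<eta> * q k \<le> lam k' * \<eta> * p k'"
    unfolding k p_eq_q using lam_range[of k'] \<eta>_pos q_pos[of "Suc k'"] by (intro mult_right_mono) auto
  also have "\<dots> \<le> \<Lambda> k"
    unfolding \<Lambda>_def k using lam_pos \<eta>_pos q_pos p_eq_q
    by (intro member_le_sum) (auto simp: less_imp_le)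
  finally show ?thesis .
qed

lemma inner_ybar_le:
  assumes u: "u \<in> VI_sol F X" and k: "1 \<le> k"
  shows "inner (H u) (ybar k - u) \<le> real (k + 1) * (1 - \<beta>) ^ k * ((diameter X)\<^sup>2 / (lam_lo * \<eta>))"
proof -
  define S where "S = (\<Sum>j<k. (lam j * \<eta> * p j) * inner (H u) (y j - u))"
  have low_pos: "0 < lam_lo * \<eta> * q k"
    using lam_lo_pos \<eta>_pos q_pos by simp
  then have \<Lambda>_pos: "0 < \<Lambda> k"
    using \<Lambda>_ge[OF k] by linarith
  have "(\<Sum>j<k. (lam j * \<eta> * p j) *\<^sub>R (y j - u))
      = (\<Sum>j<k. (lam j * \<eta> * p j) *\<^sub>R y j) - \<Lambda> k *\<^sub>R u"
    unfolding \<Lambda>_def by (simp add: scaleR_diff_right sum_subtractf scaleR_sum_left)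
  then have "ybar k - u = inverse (\<Lambda> k) *\<^sub>R (\<Sum>j<k. (lam j * \<eta> * p j) *\<^sub>R (y j - u))"
    unfolding ybar_def using \<Lambda>_pos by (simp add: scaleR_diff_right)
  then have "inner (H u) (ybar k - u) = inverse (\<Lambda> k) * S"
    unfolding S_def by (simp add: inner_sum_right)
  also have "\<dots> \<le> inverse (\<Lambda> k) * (real (k + 1) * (diameter X)\<^sup>2)"
  proof -
    have "2 * S \<le> (2 * real k + 1) * (diameter X)\<^sup>2"
      using weighted_gap_sum_le[OF u, of k] unfolding S_def by (simp add: sum_distrib_left mult.assoc)
    also have "\<dots> \<le> 2 * (real (k + 1) * (diameter X)\<^sup>2)"
      by (simp add: algebra_simps)
    finally show ?thesis
      using \<Lambda>_pos by (intro mult_left_mono) auto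
  qed
  also have "\<dots> \<le> (1 - \<beta>) ^ k / (lam_lo * \<eta>) * (real (k + 1) * (diameter X)\<^sup>2)"
  proof (rule mult_right_mono)
    have "inverse (\<Lambda> k) \<le> inverse (lam_lo * \<eta> * q k)"
      using \<Lambda>_ge[OF k] low_pos by (rule le_imp_inverse_le)
    also have "\<dots> = inverse (q k) / (lam_lo * \<eta>)"
      by (simp add: field_simps)
    also have "\<dots> \<le> (1 - \<beta>) ^ k / (lam_lo * \<eta>)"
      using inverse_q_le lam_lo_pos \<eta>_pos by (intro divide_right_mono) auto
    finally show "inverse (\<Lambda> k) \<le> (1 - \<beta>) ^ k / (lam_lo * \<eta>)" .
  qed simp
  finally show ?thesis
    by (simp add: field_simps)
qed

lemma H_image_bounded: "bounded (H ` X)"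
proof -
  have "LH-lipschitz_on X H"
    using X_sub \<Omega>_sub by (intro lipschitz_on_subset[OF H_lip]) auto
  then show ?thesis
    by (intro compact_imp_bounded compact_continuous_image lipschitz_on_continuous_on X_compact)
qed

end

theorem corollary4p14:
  fixes F H :: "'a::euclidean_space \<Rightarrow> 'a"
    and DF DH X \<Omega> :: "'a set"
    and LF LH \<mu> \<eta> lam_lo lam_hi :: real
    and \<alpha> lam :: "nat \<Rightarrow> real"
    and x w y :: "nat \<Rightarrow> 'a"
  defines "L \<equiv> LF + \<eta> * LH"
  defines "\<beta>k \<equiv> (\<lambda>k. ireg_beta L \<eta> \<mu> (lam k))"
  defines "p \<equiv> (\<lambda>k. inverse (\<Prod>i\<in>{0..k}. 1 - \<beta>k i))"
  defines "\<Lambda> \<equiv> (\<lambda>k. \<Sum>j<k. lam j * \<eta> * p j)"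
  defines "ybar \<equiv> (\<lambda>k. inverse (\<Lambda> k) *\<^sub>R (\<Sum>j<k. (lam j * \<eta> * p j) *\<^sub>R y j))"
  defines "\<beta> \<equiv> inverse (1 / (1 - lam_hi\<^sup>2 * L\<^sup>2) + 1 / (2 * lam_lo * \<eta> * \<mu>))"
  defines "Q \<equiv> VI_sol F X"
  defines "BH \<equiv> (SUP q\<in>Q. norm (H q))"
  assumes F_mono: "monotone_map DF F" and F_lip: "lipschitz_on LF DF F" and LF_pos: "LF > 0"
    and H_mono: "monotone_map DH H" and H_lip: "lipschitz_on LH DH H" and LH_pos: "LH > 0"
    and H_strong: "strongly_monotone_map \<mu> DH H" and mu_pos: "\<mu> > 0"
    and X_ne: "X \<noteq> {}" and X_compact: "compact X" and X_convex: "convex X"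
    and Om_ne: "\<Omega> \<noteq> {}" and Om_closed: "closed \<Omega>" and Om_convex: "convex \<Omega>"
    and X_sub: "X \<subseteq> \<Omega>" and Om_sub: "\<Omega> \<subseteq> DF \<inter> DH"
    and Q_ne: "Q \<noteq> {}"
    and eta_pos: "\<eta> > 0"
    and lam_bounds: "0 < lam_lo" "lam_lo \<le> lam_hi" "lam_hi < 1 / L"
    and lam_range: "\<And>k. lam_lo \<le> lam k \<and> lam k \<le> lam_hi"
    and alpha_nonneg: "\<And>k. 0 \<le> \<alpha> k"
    and alpha0: "\<alpha> 0 \<le> 1"
    and alpha_dec: "\<And>k. \<alpha> (Suc k) \<le> (1 - \<beta>k k) * \<alpha> k"
    and x0: "x 0 \<in> X"
    and w_def: "\<And>k. w k = x k + \<alpha> k *\<^sub>R (x k - (case k of 0 \<Rightarrow> x 0 | Suc j \<Rightarrow> x j))"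
    and y_def: "\<And>k. y k = closest_point X (w k - lam k *\<^sub>R
                   (F (closest_point \<Omega> (w k)) + \<eta> *\<^sub>R H (closest_point \<Omega> (w k))))"
    and x_def: "\<And>k. x (Suc k) = closest_point X (w k - lam k *\<^sub>R (F (y k) + \<eta> *\<^sub>R H (y k)))"
    and k_pos: "k \<ge> 1"
  shows "- BH * infdist (ybar k) Q \<le> Gap (ybar k) H Q
         \<and> Gap (ybar k) H Q \<le> real (k + 1) * (1 - \<beta>) ^ k * ((diameter X)\<^sup>2 / (lam_lo * \<eta>))"
proof -
  have "0 < L"
    using assms(1) LF_pos LH_pos eta_pos by (simp add: add_pos_pos)
  then have lam_hi_L: "lam_hi * L < 1"
    using lam_bounds(3) by (simp add: field_simps)
  have w_eq: "w k = x k + \<alpha> k *\<^sub>R (x k - x (k - 1))" for k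
    using w_def[of k] by (cases k) auto
  interpret I: ineireg F H DF DH X \<Omega> LF LH L \<mu> \<eta> lam_lo lam_hi \<alpha> lam x w y
    by (unfold_locales; fact F_mono F_lip H_lip H_strong mu_pos eta_pos assms(1)[THEN meta_eq_to_obj_eq]
        X_ne X_compact X_convex Om_closed Om_convex X_sub Om_sub lam_bounds(1) lam_hi_L lam_range
        alpha_nonneg alpha0 alpha_dec[unfolded assms(2)] x0 w_eq y_def x_def)
  have ybar_eq: "ybar k = I.ybar k"
    unfolding assms(2-5) I.ybar_def I.\<Lambda>_def I.p_def ..
  have Q_sub: "Q \<subseteq> X"
    unfolding assms(7) VI_sol_def by auto
  have "- BH * infdist (ybar k) Q \<le> Gap (ybar k) H Q"
    unfolding assms(8) using Q_ne Q_sub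
    by (intro Gap_ge_neg_mult_infdist bounded_subset[OF compact_imp_bounded[OF X_compact]]
        bounded_subset[OF I.H_image_bounded]) auto
  moreover have "Gap (ybar k) H Q \<le> real (k + 1) * (1 - \<beta>) ^ k * ((diameter X)\<^sup>2 / (lam_lo * \<eta>))"
    unfolding ybar_eq assms(6,7) using Q_ne[unfolded assms(7)] I.inner_ybar_le k_pos
    by (intro Gap_le) auto
  ultimately show ?thesis ..
qed

end
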